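(* Let $(\rho,\sigma)\in\mathfrak V$ with $\sigma\le0$ and $P,Q\in W^{(l)}\setminus\{0\}$. If $\ell_{\rho,\sigma}(P)=\sum_{i=0}^{\alpha}\lambda_ix^{\frac rl-\frac{i\sigma}\rho}y^{s+i}$ and $\ell_{\rho,\sigma}(Q)=\sum_{j=0}^{\beta}\mu_jx^{\frac ul-\frac{j\sigma}\rho}y^{v+j}$ with $\lambda_0,\lambda_\alpha,\mu_0,\mu_\beta\neq0$, then $$[P,Q]_{\rho,\sigma}=\sum_{i=0}^{\alpha}\sum_{j=0}^{\beta}\lambda_i\mu_jc_{ij}\,x^{\frac{r+u}{l}-\frac{(i+j)\sigma}{\rho}-1}y^{s+v+i+j-1},$$ where $c_{ij}=\bigl(\frac ul-\frac{j\sigma}\rho,\,v+j\bigr)\times\bigl(\frac rl-\frac{i\sigma}\rho,\,s+i\bigr)$ and $(a_1,a_2)\times(b_1,b_2):=a_1b_2-a_2b_1$.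
   Context: $K$ is a field of characteristic zero, $l\in\mathbb{N}$. $W^{(l)}$ is the associative $K$-algebra with $K$-basis $\{X^{i/l}Y^j:i\in\mathbb{Z},j\in\mathbb{N}_0\}$, powers of $X$ multiplying as Laurent monomials and $[Y,X^\alpha]=\alpha X^{\alpha-1}$ for $\alpha\in\frac1l\mathbb{Z}$. $L^{(l)}=K[x^{\pm1/l},y]$, $\Psi^{(l)}(X^{i/l}Y^j)=x^{i/l}y^j$ ($K$-linear); supports are sets of exponents with nonzero coefficient. $\mathfrak V=\{(\rho,\sigma)\in\mathbb{Z}^2:\gcd(\rho,\sigma)=1,\rho+\sigma>0\}$. For $P\ne0$, $v_{\rho,\sigma}(P)=\max\{\rho a+\sigma b:(a,b)\in\mathrm{Supp}(P)\}$, $\ell_{\rho,\sigma}(P)\in L^{(l)}$ = sum of terms of $\Psi^{(l)}(P)$ attaining it. $[P,Q]_{\rho,\sigma}:=0$ if $[P,Q]=0$ or $v_{\rho,\sigma}([P,Q])<v_{\rho,\sigma}(P)+v_{\rho,\sigma}(Q)-(\rho+\sigma)$, and $:=\ell_{\rho,\sigma}([P,Q])$ otherwise. *)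

theory Defs
  imports Complex_Main
begin

text \<open>Elements of W^(l) and of L^(l) are both represented by their coefficient
functions: the value at (q,j) is the coefficient of X^q Y^j (resp. x^q y^j).
Psi^(l) is therefore the identity on coefficient functions.\<close>

type_synonym 'a wl = "rat \<times> nat \<Rightarrow> 'a"

definition supp :: "'a::zero wl \<Rightarrow> (rat \<times> nat) set" where
  "supp P = {z. P z \<noteq> 0}"

definition in_W :: "nat \<Rightarrow> 'a::zero wl \<Rightarrow> bool" where
  "in_W l P \<longleftrightarrow> finite (supp P) \<and>
     (\<forall>(q,j)\<in>supp P. of_nat l * q \<in> \<int>)"

definition ffact :: "rat \<Rightarrow> nat \<Rightarrow> 'a::field_char_0" where
  "ffact c t = (\<Prod>m<t. of_rat (c - of_nat m))"

text \<open>Product in W^(l): (X^a Y^j)(X^c Y^k) = sum_t C(j,t) c^{(t)} X^{a+c-t} Y^{j+k-t},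
 which follows from [Y, X^c] = c X^{c-1}.\<close>
definition wmult :: "'a::field_char_0 wl \<Rightarrow> 'a wl \<Rightarrow> 'a wl" where
  "wmult P Q = (\<lambda>(q,b). \<Sum>(a,j)\<in>supp P. \<Sum>(c,k)\<in>supp Q. \<Sum>t\<in>{0..j}.
      if q = a + c - of_nat t \<and> b + t = j + k
      then P (a,j) * Q (c,k) * of_nat (j choose t) * ffact c t else 0)"

definition wcomm :: "'a::field_char_0 wl \<Rightarrow> 'a wl \<Rightarrow> 'a wl" where
  "wcomm P Q = (\<lambda>z. wmult P Q z - wmult Q P z)"

definition vdeg :: "int \<Rightarrow> int \<Rightarrow> 'a::zero wl \<Rightarrow> rat" where
  "vdeg \<rho> \<sigma> P = Max ((\<lambda>(a,b). of_int \<rho> * a + of_int \<sigma> * of_nat b) ` supp P)"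

definition lead :: "int \<Rightarrow> int \<Rightarrow> 'a::zero wl \<Rightarrow> 'a wl" where
  "lead \<rho> \<sigma> P = (\<lambda>(a,b). if of_int \<rho> * a + of_int \<sigma> * of_nat b = vdeg \<rho> \<sigma> P
                           then P (a,b) else 0)"

definition bracket :: "int \<Rightarrow> int \<Rightarrow> 'a::field_char_0 wl \<Rightarrow> 'a wl \<Rightarrow> 'a wl" where
  "bracket \<rho> \<sigma> P Q =
     (if wcomm P Q = (\<lambda>_. 0) \<or>
         vdeg \<rho> \<sigma> (wcomm P Q) < vdeg \<rho> \<sigma> P + vdeg \<rho> \<sigma> Q - of_int (\<rho> + \<sigma>)
      then (\<lambda>_. 0) else lead \<rho> \<sigma> (wcomm P Q))"

definition in_frakV :: "int \<Rightarrow> int \<Rightarrow> bool" where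
  "in_frakV \<rho> \<sigma> \<longleftrightarrow> gcd \<rho> \<sigma> = 1 \<and> \<rho> + \<sigma> > 0"

end

theory Submission
  imports Defs
begin

text \<open>The product of monomials is
  (X^a Y^j)(X^c Y^k) = \<Sum>_t C(j,t) c^(t) X^(a+c-t) Y^(j+k-t), and its t-th term has
  (\<rho>,\<sigma>)-weight lowered by t(\<rho>+\<sigma>) > 0. In the commutator the t = 0 terms cancel, so
  [P,Q] has weight at most v(P) + v(Q) - (\<rho>+\<sigma>), and in that weight only the t = 1 terms
  of the leading forms survive. These form the Poisson bracket
  {f,g} = f_y g_x - f_x g_y of \<ell>(P) and \<ell>(Q); hence [P,Q]_(\<rho>,\<sigma>) = {\<ell>(P), \<ell>(Q)} for all P, Q,
  and the formula follows by expanding this bracket bilinearly.\<close>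

definition vweight :: "int \<Rightarrow> int \<Rightarrow> rat \<times> nat \<Rightarrow> rat" where
  "vweight \<rho> \<sigma> z = of_int \<rho> * fst z + of_int \<sigma> * of_nat (snd z)"

lemma vweight_le_vdeg:
  "finite (supp P) \<Longrightarrow> z \<in> supp P \<Longrightarrow> vweight \<rho> \<sigma> z \<le> vdeg \<rho> \<sigma> P"
  unfolding vdeg_def vweight_def
  by (rule Max_ge) (auto intro!: image_eqI[where x=z] simp: split_beta)

lemma vdeg_le:
  assumes "finite (supp P)" "supp P \<noteq> {}" "\<And>z. z \<in> supp P \<Longrightarrow> vweight \<rho> \<sigma> z \<le> c"
  shows "vdeg \<rho> \<sigma> P \<le> c"
  using assms unfolding vdeg_def by (subst Max_le_iff) (auto simp: vweight_def split_beta)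

lemma vweight_shift:
  assumes "fst z = fst x + fst y - of_nat t" "snd z + t = snd x + snd y"
  shows "vweight \<rho> \<sigma> z = vweight \<rho> \<sigma> x + vweight \<rho> \<sigma> y - of_nat t * of_int (\<rho> + \<sigma>)"
proof -
  from assms(2) have "of_nat (snd z) = (of_nat (snd x) + of_nat (snd y) - of_nat t :: rat)"
    by (metis add_diff_cancel_right' of_nat_add)
  with assms(1) have "vweight \<rho> \<sigma> z = of_int \<rho> * (fst x + fst y - of_nat t)
      + of_int \<sigma> * (of_nat (snd x) + of_nat (snd y) - of_nat t)"
    by (simp only: vweight_def)
  then show ?thesis
    by (simp add: vweight_def algebra_simps)
qed

lemma lead_eq_if: "lead \<rho> \<sigma> P z = (if vweight \<rho> \<sigma> z = vdeg \<rho> \<sigma> P then P z else 0)"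
  by (cases z) (simp add: lead_def vweight_def)

lemma lead_nonzeroD: "lead \<rho> \<sigma> P z \<noteq> 0 \<Longrightarrow> z \<in> supp P \<and> vweight \<rho> \<sigma> z = vdeg \<rho> \<sigma> P"
  by (auto simp: lead_eq_if supp_def split: if_splits)

lemma supp_lead_subset: "supp (lead \<rho> \<sigma> P) \<subseteq> supp P"
  by (auto simp: supp_def lead_eq_if)

lemma supp_indexed_subset:
  assumes "\<And>z. F z = (\<Sum>i\<in>I. if z = X i then c i else 0)"
  shows "supp F \<subseteq> X ` I"
  using assms by (auto simp: supp_def elim: sum.not_neutral_contains_not_neutral split: if_splits)

lemma sum_supp_indexed:
  fixes F :: "'a::comm_ring_1 wl"
  assumes F: "\<And>z. F z = (\<Sum>i\<in>I. if z = X i then c i else 0)"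
    and "inj_on X I" "finite I"
  shows "(\<Sum>z\<in>supp F. F z * H z) = (\<Sum>i\<in>I. c i * H (X i))"
proof -
  have "finite (supp F)"
    using supp_indexed_subset[OF F] \<open>finite I\<close> by (metis finite_surj)
  have F_at: "F (X i) = c i" if "i \<in> I" for i
  proof -
    have "F (X i) = (\<Sum>i'\<in>I. if i' = i then c i' else 0)"
      unfolding F using that \<open>inj_on X I\<close> by (intro sum.cong) (auto simp: inj_on_def)
    then show ?thesis using that \<open>finite I\<close> by simp
  qed
  have "(\<Sum>z\<in>supp F. F z * H z) = (\<Sum>z\<in>supp F. \<Sum>i\<in>I. if z = X i then c i * H z else 0)"
    unfolding F sum_distrib_right by (intro sum.cong) auto
  also have "\<dots> = (\<Sum>i\<in>I. if X i \<in> supp F then c i * H (X i) else 0)"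
    using \<open>finite (supp F)\<close> by (subst sum.swap) (simp add: sum.delta)
  also have "\<dots> = (\<Sum>i\<in>I. c i * H (X i))"
    using F_at by (intro sum.cong) (auto simp: supp_def)
  finally show ?thesis .
qed

definition mono_prod_coeff :: "rat \<times> nat \<Rightarrow> rat \<times> nat \<Rightarrow> rat \<times> nat \<Rightarrow> 'a::field_char_0"
  where
  "mono_prod_coeff x y z = (\<Sum>t\<in>{0..snd x}.
     if fst z = fst x + fst y - of_nat t \<and> snd z + t = snd x + snd y
     then of_nat (snd x choose t) * ffact (fst y) t else 0)"

lemma wmult_eq_sum_mono_prod_coeff:
  "wmult P Q z = (\<Sum>x\<in>supp P. \<Sum>y\<in>supp Q. P x * Q y * mono_prod_coeff x y z)"
  unfolding wmult_def mono_prod_coeff_def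
  by (cases z) (auto simp: split_beta sum_distrib_left mult.assoc intro!: sum.cong)

lemma mono_prod_coeff_nonzeroD:
  assumes "mono_prod_coeff x y z \<noteq> 0"
  obtains t where "t \<le> snd x" "z = (fst x + fst y - of_nat t, snd x + snd y - t)"
proof -
  from assms obtain t
    where "t \<le> snd x" "fst z = fst x + fst y - of_nat t" "snd z + t = snd x + snd y"
    unfolding mono_prod_coeff_def
    by (auto elim!: sum.not_neutral_contains_not_neutral split: if_splits)
  then show thesis by (intro that[of t]) (auto simp: prod_eq_iff)
qed

lemma finite_supp_wmult:
  assumes "finite (supp P)" "finite (supp Q)"
  shows "finite (supp (wmult P Q))"
proof -
  define M where "M = Max (snd ` supp P)"
  have "supp (wmult P Q) \<subseteq>
      (\<lambda>(x, y, t). (fst x + fst y - of_nat t, snd x + snd y - t)) ` (supp P \<times> supp Q \<times> {..M})"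
  proof
    fix z assume "z \<in> supp (wmult P Q)"
    then obtain x y where xy: "x \<in> supp P" "y \<in> supp Q" "mono_prod_coeff x y z \<noteq> (0::'a)"
      unfolding supp_def wmult_eq_sum_mono_prod_coeff
      by (auto elim!: sum.not_neutral_contains_not_neutral)
    moreover have "snd x \<le> M"
      unfolding M_def using xy assms by (intro Max_ge) auto
    ultimately show "z \<in> (\<lambda>(x, y, t). (fst x + fst y - of_nat t, snd x + snd y - t))
        ` (supp P \<times> supp Q \<times> {..M})"
      by (elim mono_prod_coeff_nonzeroD) (auto intro!: image_eqI[where x="(x, _, _)"])
  qed
  then show ?thesis by (rule finite_subset) (use assms in auto)
qed

lemma finite_supp_wcomm:
  assumes "finite (supp P)" "finite (supp Q)"
  shows "finite (supp (wcomm P Q))"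
proof (rule finite_subset)
  show "supp (wcomm P Q) \<subseteq> supp (wmult P Q) \<union> supp (wmult Q P)"
    by (auto simp: wcomm_def supp_def)
qed (use assms finite_supp_wmult in auto)

text \<open>The terms t \<ge> 2 of the product of monomials lie below weight
  vweight x + vweight y - 2(\<rho>+\<sigma>).\<close>

lemma mono_prod_coeff_high_weight:
  assumes "0 < \<rho> + \<sigma>"
    and "vweight \<rho> \<sigma> x + vweight \<rho> \<sigma> y - 2 * of_int (\<rho> + \<sigma>) < vweight \<rho> \<sigma> z"
  shows "mono_prod_coeff x y z =
      (if z = (fst x + fst y, snd x + snd y) then 1 else 0)
    + (if fst z = fst x + fst y - 1 \<and> snd z + 1 = snd x + snd y
       then of_nat (snd x) * of_rat (fst y) else (0::'a::field_char_0))"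
proof -
  define f :: "nat \<Rightarrow> 'a"
    where "f t = (if fst z = fst x + fst y - of_nat t \<and> snd z + t = snd x + snd y
      then of_nat (snd x choose t) * ffact (fst y) t else 0)" for t
  have "f t = 0" if "t \<ge> 2" for t
  proof (rule ccontr)
    assume "f t \<noteq> 0"
    then have "vweight \<rho> \<sigma> z = vweight \<rho> \<sigma> x + vweight \<rho> \<sigma> y - of_nat t * of_int (\<rho> + \<sigma>)"
      by (intro vweight_shift) (auto simp: f_def split: if_splits)
    moreover have "2 * of_int (\<rho> + \<sigma>) \<le> (of_nat t * of_int (\<rho> + \<sigma>) :: rat)"
      using that assms(1) by (intro mult_right_mono) auto
    ultimately show False using assms(2) by linarith
  qed
  then have "mono_prod_coeff x y z =
      (\<Sum>t\<in>{0..snd x}. (if t = 0 then f 0 else 0) + (if t = 1 then f 1 else 0))"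
    unfolding mono_prod_coeff_def f_def[symmetric]
    by (intro sum.cong) (auto simp: not_less_eq_eq numeral_2_eq_2)
  also have "\<dots> = f 0 + (if 1 \<le> snd x then f 1 else 0)"
    by (simp add: sum.distrib)
  finally show ?thesis
    by (cases z; cases "snd x = 0") (auto simp: f_def ffact_def)
qed

text \<open>Sign convention {f,g} = f_y g_x - f_x g_y, matching
  [X^a Y^j, X^c Y^k] = (jc - ak) X^(a+c-1) Y^(j+k-1) + terms of lower weight.\<close>

definition poisson_coeff :: "rat \<times> nat \<Rightarrow> rat \<times> nat \<Rightarrow> rat \<times> nat \<Rightarrow> 'a::field_char_0"
  where
  "poisson_coeff x y z =
     (if fst z = fst x + fst y - 1 \<and> snd z + 1 = snd x + snd y
      then of_nat (snd x) * of_rat (fst y) - of_nat (snd y) * of_rat (fst x) else 0)"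

definition poisson :: "'a::field_char_0 wl \<Rightarrow> 'a wl \<Rightarrow> 'a wl" where
  "poisson F G z = (\<Sum>x\<in>supp F. \<Sum>y\<in>supp G. F x * G y * poisson_coeff x y z)"

lemma mono_comm_coeff_high_weight:
  assumes "0 < \<rho> + \<sigma>"
    and "vweight \<rho> \<sigma> x + vweight \<rho> \<sigma> y - 2 * of_int (\<rho> + \<sigma>) < vweight \<rho> \<sigma> z"
  shows "mono_prod_coeff x y z - mono_prod_coeff y x z = (poisson_coeff x y z :: 'a::field_char_0)"
proof -
  have yx: "vweight \<rho> \<sigma> y + vweight \<rho> \<sigma> x - 2 * of_int (\<rho> + \<sigma>) < vweight \<rho> \<sigma> z"
    using assms(2) by (simp add: add.commute)
  show ?thesis
    unfolding mono_prod_coeff_high_weight[OF assms] mono_prod_coeff_high_weight[OF assms(1) yx]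
    by (auto simp: poisson_coeff_def add.commute)
qed

lemma vweight_poisson_coeff:
  assumes "poisson_coeff x y z \<noteq> 0"
  shows "vweight \<rho> \<sigma> z = vweight \<rho> \<sigma> x + vweight \<rho> \<sigma> y - of_int (\<rho> + \<sigma>)"
  using assms vweight_shift[of z x y 1 \<rho> \<sigma>] by (auto simp: poisson_coeff_def split: if_splits)

lemma poisson_eq_sum_superset:
  assumes "finite A" "finite B" "supp F \<subseteq> A" "supp G \<subseteq> B"
  shows "poisson F G z = (\<Sum>x\<in>A. \<Sum>y\<in>B. F x * G y * poisson_coeff x y z)"
  unfolding poisson_def using assms
  by (intro sum.mono_neutral_cong_left sum.mono_neutral_cong_left[THEN sym])
     (auto simp: supp_def)

lemma poisson_lead_nonzeroD:
  assumes "poisson (lead \<rho> \<sigma> P) (lead \<rho> \<sigma> Q) z \<noteq> 0"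
  shows "vweight \<rho> \<sigma> z = vdeg \<rho> \<sigma> P + vdeg \<rho> \<sigma> Q - of_int (\<rho> + \<sigma>)"
proof -
  obtain x y where "lead \<rho> \<sigma> P x * lead \<rho> \<sigma> Q y * poisson_coeff x y z \<noteq> 0"
    using assms unfolding poisson_def by (auto elim!: sum.not_neutral_contains_not_neutral)
  then show ?thesis
    using lead_nonzeroD[of \<rho> \<sigma> P x] lead_nonzeroD[of \<rho> \<sigma> Q y]
      vweight_poisson_coeff[of x y z \<rho> \<sigma>]
    by auto
qed

text \<open>In weights \<ge> v(P) + v(Q) - (\<rho>+\<sigma>) only the terms t \<le> 1 of the products contribute,
  and a term P x Q y {x,y} reaches these weights only if x and y lie on the leading forms.\<close>

lemma wcomm_eq_poisson_lead:
  assumes "finite (supp P)" "finite (supp Q)" "0 < \<rho> + \<sigma>"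
    and "vdeg \<rho> \<sigma> P + vdeg \<rho> \<sigma> Q - of_int (\<rho> + \<sigma>) \<le> vweight \<rho> \<sigma> z"
  shows "wcomm P Q z = poisson (lead \<rho> \<sigma> P) (lead \<rho> \<sigma> Q) z"
proof -
  have "wcomm P Q z = (\<Sum>x\<in>supp P. \<Sum>y\<in>supp Q.
      P x * Q y * (mono_prod_coeff x y z - mono_prod_coeff y x z))"
    unfolding wcomm_def wmult_eq_sum_mono_prod_coeff
    by (subst (2) sum.swap) (simp add: sum_subtractf algebra_simps)
  also have "\<dots> = (\<Sum>x\<in>supp P. \<Sum>y\<in>supp Q.
      lead \<rho> \<sigma> P x * lead \<rho> \<sigma> Q y * poisson_coeff x y z)"
  proof (intro sum.cong refl)
    fix x y assume "x \<in> supp P" "y \<in> supp Q"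
    then have x: "vweight \<rho> \<sigma> x \<le> vdeg \<rho> \<sigma> P" and y: "vweight \<rho> \<sigma> y \<le> vdeg \<rho> \<sigma> Q"
      using assms(1,2) vweight_le_vdeg by blast+
    have "mono_prod_coeff x y z - mono_prod_coeff y x z = poisson_coeff x y z"
      using x y assms(3,4) by (intro mono_comm_coeff_high_weight) auto
    moreover have "vweight \<rho> \<sigma> x = vdeg \<rho> \<sigma> P \<and> vweight \<rho> \<sigma> y = vdeg \<rho> \<sigma> Q"
      if "poisson_coeff x y z \<noteq> (0::'a)"
      using vweight_poisson_coeff[OF that, of \<rho> \<sigma>] x y assms(4) by auto
    ultimately show "P x * Q y * (mono_prod_coeff x y z - mono_prod_coeff y x z) =
        lead \<rho> \<sigma> P x * lead \<rho> \<sigma> Q y * poisson_coeff x y z"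
      by (cases "poisson_coeff x y z = (0::'a)") (auto simp: lead_eq_if)
  qed
  also have "\<dots> = poisson (lead \<rho> \<sigma> P) (lead \<rho> \<sigma> Q) z"
    using assms(1,2) supp_lead_subset by (intro poisson_eq_sum_superset[symmetric]) auto
  finally show ?thesis .
qed

theorem bracket_eq_poisson_lead:
  assumes "finite (supp P)" "finite (supp Q)" "0 < \<rho> + \<sigma>"
  shows "bracket \<rho> \<sigma> P Q = poisson (lead \<rho> \<sigma> P) (lead \<rho> \<sigma> Q)"
proof
  fix z
  define W where "W = wcomm P Q"
  define N where "N = vdeg \<rho> \<sigma> P + vdeg \<rho> \<sigma> Q - of_int (\<rho> + \<sigma>)"
  have W_high: "W z' = poisson (lead \<rho> \<sigma> P) (lead \<rho> \<sigma> Q) z'"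
    if "N \<le> vweight \<rho> \<sigma> z'" for z'
    using assms that unfolding W_def N_def by (intro wcomm_eq_poisson_lead) auto
  have poisson_off: "poisson (lead \<rho> \<sigma> P) (lead \<rho> \<sigma> Q) z' = 0"
    if "vweight \<rho> \<sigma> z' \<noteq> N" for z'
    using poisson_lead_nonzeroD that unfolding N_def by blast
  have fin: "finite (supp W)"
    unfolding W_def using assms by (intro finite_supp_wcomm)
  show "bracket \<rho> \<sigma> P Q z = poisson (lead \<rho> \<sigma> P) (lead \<rho> \<sigma> Q) z"
  proof (cases "W = (\<lambda>_. 0) \<or> vdeg \<rho> \<sigma> W < N")
    case True
    have "poisson (lead \<rho> \<sigma> P) (lead \<rho> \<sigma> Q) z = 0"
    proof (cases "vweight \<rho> \<sigma> z = N")
      case on_N: True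
      then have "W z = 0"
        using True vweight_le_vdeg[OF fin, of z \<rho> \<sigma>] by (force simp: supp_def)
      with on_N W_high show ?thesis by simp
    qed (rule poisson_off)
    moreover have "bracket \<rho> \<sigma> P Q z = 0"
      using True by (auto simp: bracket_def W_def N_def)
    ultimately show ?thesis by simp
  next
    case False
    have "vdeg \<rho> \<sigma> W \<le> N"
    proof (rule vdeg_le[OF fin])
      show "supp W \<noteq> {}" using False by (auto simp: supp_def)
      show "vweight \<rho> \<sigma> z' \<le> N" if "z' \<in> supp W" for z'
        using that W_high[of z'] poisson_off[of z']
        by (cases "vweight \<rho> \<sigma> z' \<le> N") (auto simp: supp_def)
    qed
    with False have "vdeg \<rho> \<sigma> W = N" by simp
    then show ?thesis
      using False W_high poisson_off by (auto simp: bracket_def lead_eq_if W_def N_def)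
  qed
qed

lemma poisson_indexed:
  assumes F: "\<And>z. F z = (\<Sum>i\<in>I. if z = X i then c i else 0)" "inj_on X I" "finite I"
    and G: "\<And>z. G z = (\<Sum>j\<in>J. if z = Y j then d j else 0)" "inj_on Y J" "finite J"
  shows "poisson F G z = (\<Sum>i\<in>I. \<Sum>j\<in>J. c i * d j * poisson_coeff (X i) (Y j) z)"
proof -
  have "poisson F G z = (\<Sum>x\<in>supp F. F x * (\<Sum>y\<in>supp G. G y * poisson_coeff x y z))"
    by (simp add: poisson_def sum_distrib_left mult.assoc)
  also have "\<dots> = (\<Sum>i\<in>I. c i * (\<Sum>y\<in>supp G. G y * poisson_coeff (X i) y z))"
    by (rule sum_supp_indexed[OF F])
  also have "\<dots> = (\<Sum>i\<in>I. c i * (\<Sum>j\<in>J. d j * poisson_coeff (X i) (Y j) z))"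
    by (simp add: sum_supp_indexed[OF G])
  finally show ?thesis
    by (simp add: sum_distrib_left mult.assoc)
qed

theorem proposition2p5:
  fixes l :: nat and \<rho> \<sigma> r u :: int and s v \<alpha> \<beta> :: nat
    and P Q :: "'a::field_char_0 wl" and lam mu :: "nat \<Rightarrow> 'a"
  assumes "l > 0"
    and "in_frakV \<rho> \<sigma>" and "\<sigma> \<le> 0"
    and "in_W l P" and "in_W l Q" and "P \<noteq> (\<lambda>_. 0)" and "Q \<noteq> (\<lambda>_. 0)"
    and "\<And>q b. lead \<rho> \<sigma> P (q,b) = (\<Sum>i\<le>\<alpha>.
            if q = of_int r / of_nat l - of_nat i * of_int \<sigma> / of_int \<rho> \<and> b = s + i
            then lam i else 0)"
    and "\<And>q b. lead \<rho> \<sigma> Q (q,b) = (\<Sum>j\<le>\<beta>.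
            if q = of_int u / of_nat l - of_nat j * of_int \<sigma> / of_int \<rho> \<and> b = v + j
            then mu j else 0)"
    and "lam 0 \<noteq> 0" and "lam \<alpha> \<noteq> 0" and "mu 0 \<noteq> 0" and "mu \<beta> \<noteq> 0"
  shows "\<And>q b. bracket \<rho> \<sigma> P Q (q,b) = (\<Sum>i\<le>\<alpha>. \<Sum>j\<le>\<beta>.
            if q = of_int (r + u) / of_nat l - of_nat (i + j) * of_int \<sigma> / of_int \<rho> - 1
               \<and> int b = int s + int v + int i + int j - 1
            then lam i * mu j *
              of_rat ((of_int u / of_nat l - of_nat j * of_int \<sigma> / of_int \<rho>) * of_nat (s + i)
                    - of_nat (v + j) * (of_int r / of_nat l - of_nat i * of_int \<sigma> / of_int \<rho>))
            else 0)"
proof -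
  fix q b
  define p :: "nat \<Rightarrow> rat"
    where "p k = of_int r / of_nat l - of_nat k * of_int \<sigma> / of_int \<rho>" for k
  define p' :: "nat \<Rightarrow> rat"
    where "p' k = of_int u / of_nat l - of_nat k * of_int \<sigma> / of_int \<rho>" for k
  have "lead \<rho> \<sigma> P z = (\<Sum>i\<le>\<alpha>. if z = (p i, s + i) then lam i else 0)" for z
    using assms(8) by (cases z) (simp add: p_def)
  moreover have "lead \<rho> \<sigma> Q z = (\<Sum>j\<le>\<beta>. if z = (p' j, v + j) then mu j else 0)" for z
    using assms(9) by (cases z) (simp add: p'_def)
  ultimately have "poisson (lead \<rho> \<sigma> P) (lead \<rho> \<sigma> Q) (q, b) =
      (\<Sum>i\<le>\<alpha>. \<Sum>j\<le>\<beta>. lam i * mu j * poisson_coeff (p i, s + i) (p' j, v + j) (q, b))"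
    by (intro poisson_indexed) (auto simp: inj_on_def)
  moreover have "bracket \<rho> \<sigma> P Q = poisson (lead \<rho> \<sigma> P) (lead \<rho> \<sigma> Q)"
    using assms(2,4,5) by (intro bracket_eq_poisson_lead) (auto simp: in_W_def in_frakV_def)
  moreover have
    "of_int (r + u) / of_nat l - of_nat (i + j) * of_int \<sigma> / of_int \<rho> - 1 = p i + p' j - 1"
    for i j by (simp add: p_def p'_def add_divide_distrib diff_divide_distrib algebra_simps)
  moreover have "int b = int s + int v + int i + int j - 1 \<longleftrightarrow> b + 1 = s + i + (v + j)" for i j
    by arith
  ultimately show "bracket \<rho> \<sigma> P Q (q, b) = (\<Sum>i\<le>\<alpha>. \<Sum>j\<le>\<beta>.
      if q = of_int (r + u) / of_nat l - of_nat (i + j) * of_int \<sigma> / of_int \<rho> - 1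
         \<and> int b = int s + int v + int i + int j - 1
      then lam i * mu j * of_rat (p' j * of_nat (s + i) - of_nat (v + j) * p i) else 0)"
    by (auto simp: poisson_coeff_def of_rat_diff of_rat_mult of_rat_add mult.commute
        intro!: sum.cong)
qed

end
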